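(* If a \textsc{2-Visits} instance has a feasible schedule, then it has a feasible schedule in which (1) all secondary visits are placed in gaps (equivalently, no primary visit is placed in a gap), and (2) the secondary visits appear in the schedule in order of non-decreasing induced deadlines.
   Context: \textsc{2-Visits} (primary/secondary formulation): given a non-decreasing sequence of $n$ positive integers $d_1\le\dots\le d_n$, decide whether there exists a schedule of length $2n$ (each position $1,\dots,2n$ holds one visit) containing one primary and one secondary visit of each node $i\in[n]$, such that the primary visit of $i$ is at position at most $d_i$, and the secondary visit of $i$ is either before its primary visit or at most $d_i$ positions after its primary visit. Such a schedule is feasible. The discretized sequence $A=\langle a_1,\dots,a_n\rangle$ is defined by $a_n=d_n$ and $a_i=\min\{a_{i+1}-1,d_i\}$ for $i<n$. A position $p\in[2n]$ is a gap if $p\notin\{a_1,\dots,a_n\}$. If the primary visit of node $i$ is at position $t_i$, its induced deadline is $d_i'=d_i+t_i$. Standing assumptions: all entries of $A$ are positive and all deadlines satisfy $d_i\le 2n$ (so there are exactly $n$ gaps in $[2n]$). *)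

theory Defs
  imports Main
begin

(* Instance: n nodes indexed 1..n with deadlines d 1, ..., d n.
   Positions are 1..2n. A schedule is given by the primary position t i
   and the secondary position s i of each node i. *)

definition is_schedule :: "nat \<Rightarrow> (nat \<Rightarrow> nat) \<Rightarrow> (nat \<Rightarrow> nat) \<Rightarrow> bool" where
  "is_schedule n t s \<longleftrightarrow>
     bij_betw (\<lambda>(b, i). if b then t i else s i) (UNIV \<times> {1..n}) {1..2*n}"

definition feasible :: "nat \<Rightarrow> (nat \<Rightarrow> nat) \<Rightarrow> (nat \<Rightarrow> nat) \<Rightarrow> (nat \<Rightarrow> nat) \<Rightarrow> bool" where
  "feasible n d t s \<longleftrightarrow> is_schedule n t s \<and>
     (\<forall>i\<in>{1..n}. t i \<le> d i \<and> (s i < t i \<or> s i \<le> t i + d i))"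

(* discretized sequence: a_n = d_n, a_i = min (a_(i+1) - 1) d_i;
   disc_aux d n k = a_(n-k) *)
primrec disc_aux :: "(nat \<Rightarrow> nat) \<Rightarrow> nat \<Rightarrow> nat \<Rightarrow> int" where
  "disc_aux d n 0 = int (d n)"
| "disc_aux d n (Suc k) = min (disc_aux d n k - 1) (int (d (n - Suc k)))"

definition disc :: "(nat \<Rightarrow> nat) \<Rightarrow> nat \<Rightarrow> nat \<Rightarrow> int" where
  "disc d n i = disc_aux d n (n - i)"

definition is_gap :: "(nat \<Rightarrow> nat) \<Rightarrow> nat \<Rightarrow> nat \<Rightarrow> bool" where
  "is_gap d n p \<longleftrightarrow> p \<in> {1..2*n} \<and> int p \<notin> disc d n ` {1..n}"

definition induced_deadline :: "(nat \<Rightarrow> nat) \<Rightarrow> (nat \<Rightarrow> nat) \<Rightarrow> nat \<Rightarrow> nat" where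
  "induced_deadline d t i = d i + t i"

end

theory Submission
  imports Defs "HOL-Combinatorics.Transposition"
begin

(* Exchanging a primary visit with a later secondary visit that still lies before the
   primary's deadline keeps a schedule feasible and increases the sum of the primary
   positions. In a feasible schedule maximising this sum the primary positions are
   therefore closed: together with t_i they contain every position up to d_i. The
   discretized sequence is closed in the same sense, and two injective closed families
   below the same deadlines have the same image (at the largest position where they
   differ, count the members at or above it). So the primaries sit exactly on the a_i
   and the secondaries fill the gaps. Finally, swapping two secondary visits that are
   out of order with respect to their induced deadlines keeps feasibility and strictly
   increases the sum of s_i (d_i + t_i), so a maximiser of that weight is sorted. *)

definition deadline_closed :: "'a set \<Rightarrow> ('a \<Rightarrow> 'b::linorder) \<Rightarrow> ('a \<Rightarrow> 'b) \<Rightarrow> bool" where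
  "deadline_closed N d f \<longleftrightarrow> (\<forall>l\<in>N. {f l<..d l} \<subseteq> f ` N)"

lemma deadline_closed_int:
  "deadline_closed N d f \<Longrightarrow> deadline_closed N (int \<circ> d) (int \<circ> f)"
  unfolding deadline_closed_def
proof (intro ballI subsetI)
  fix l x assume closed: "\<forall>l\<in>N. {f l<..d l} \<subseteq> f ` N" and l: "l \<in> N"
    and x: "x \<in> {(int \<circ> f) l<..(int \<circ> d) l}"
  then have "nat x \<in> {f l<..d l}" by auto
  with closed l have "nat x \<in> f ` N" by blast
  with x show "x \<in> (int \<circ> f) ` N" by force
qed

lemma deadline_closed_no_top_disagreement:
  fixes f g d :: "'a \<Rightarrow> 'b::linorder"
  assumes "finite N" and "inj_on f N" "inj_on g N"
    and "\<forall>l\<in>N. f l \<le> d l" and "deadline_closed N d g"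
    and "x \<in> f ` N" "x \<notin> g ` N"
    and above: "{p\<in>f ` N. x < p} = {p\<in>g ` N. x < p}"
  shows False
proof -
  have "x < g l" if "l \<in> N" "x \<le> f l" for l
  proof -
    have "x \<notin> {g l<..d l}"
      using assms(5,7) that(1) unfolding deadline_closed_def by blast
    moreover have "g l \<noteq> x" using assms(7) that(1) by blast
    ultimately show ?thesis using assms(4) that by force
  qed
  then have "{l\<in>N. x \<le> f l} \<subseteq> {l\<in>N. x < g l}" by blast
  then have "card {l\<in>N. x \<le> f l} \<le> card {l\<in>N. x < g l}"
    using \<open>finite N\<close> by (intro card_mono) auto
  moreover have "card {l\<in>N. x \<le> f l} = card {p\<in>f ` N. x \<le> p}"
  proof -
    have "{p\<in>f ` N. x \<le> p} = f ` {l\<in>N. x \<le> f l}" by auto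
    then show ?thesis
      using card_image[OF inj_on_subset[OF \<open>inj_on f N\<close>]] by simp
  qed
  moreover have "card {l\<in>N. x < g l} = card {p\<in>g ` N. x < p}"
  proof -
    have "{p\<in>g ` N. x < p} = g ` {l\<in>N. x < g l}" by auto
    then show ?thesis
      using card_image[OF inj_on_subset[OF \<open>inj_on g N\<close>]] by simp
  qed
  moreover have "{p\<in>f ` N. x \<le> p} = insert x {p\<in>f ` N. x < p}"
    using \<open>x \<in> f ` N\<close> by auto
  ultimately show False
    using above \<open>finite N\<close> by simp
qed

lemma deadline_closed_image_eq:
  fixes f g d :: "'a \<Rightarrow> 'b::linorder"
  assumes fin: "finite N" and inj: "inj_on f N" "inj_on g N"
    and below: "\<forall>l\<in>N. f l \<le> d l" "\<forall>l\<in>N. g l \<le> d l"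
    and closed: "deadline_closed N d f" "deadline_closed N d g"
  shows "f ` N = g ` N"
proof (rule ccontr)
  define D where "D = (f ` N - g ` N) \<union> (g ` N - f ` N)"
  assume "f ` N \<noteq> g ` N"
  then have "D \<noteq> {}" "finite D" using fin unfolding D_def by auto
  define x where "x = Max D"
  have "x \<in> D" using \<open>D \<noteq> {}\<close> \<open>finite D\<close> unfolding x_def by simp
  have "p \<notin> D" if "x < p" for p
    using Max_ge[OF \<open>finite D\<close>, of p] that unfolding x_def by (meson leD)
  then have above: "{p\<in>f ` N. x < p} = {p\<in>g ` N. x < p}"
    unfolding D_def by auto
  show False
  proof (cases "x \<in> f ` N")
    case True
    with \<open>x \<in> D\<close> have "x \<notin> g ` N" unfolding D_def by auto
    show False
      by (rule deadline_closed_no_top_disagreement[OF fin inj below(1) closed(2) True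
            \<open>x \<notin> g ` N\<close> above])
  next
    case False
    with \<open>x \<in> D\<close> have "x \<in> g ` N" unfolding D_def by auto
    show False
      by (rule deadline_closed_no_top_disagreement[OF fin inj(2,1) below(2) closed(1)
            \<open>x \<in> g ` N\<close> False above[symmetric]])
  qed
qed

lemma disc_last: "disc d n n = int (d n)"
  by (simp add: disc_def)

lemma disc_step:
  assumes "i < n"
  shows "disc d n i = min (disc d n (Suc i) - 1) (int (d i))"
proof -
  have "n - i = Suc (n - Suc i)" and "n - Suc (n - Suc i) = i" using assms by simp_all
  then show ?thesis unfolding disc_def by simp
qed

lemma disc_le_deadline:
  assumes "i \<le> n"
  shows "disc d n i \<le> int (d i)"
  using assms disc_last[of d n] disc_step[of i n d] by (cases "i = n") auto

lemma strict_mono_on_disc: "strict_mono_on {..n} (disc d n)"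
proof (rule strict_mono_onI)
  fix i j assume "j \<in> {..n}" "i < j"
  then show "disc d n i < disc d n j"
  proof (induction j)
    case 0
    then show ?case by simp
  next
    case (Suc j)
    then have "disc d n j < disc d n (Suc j)" using disc_step[of j n d] by simp
    with Suc show ?case by (cases "i = j") auto
  qed
qed

lemma deadline_closed_disc:
  assumes mono: "\<forall>i j. 1 \<le> i \<and> i \<le> j \<and> j \<le> n \<longrightarrow> d i \<le> d j"
  shows "deadline_closed {1..n} (int \<circ> d) (disc d n)"
  unfolding deadline_closed_def
proof
  fix l assume "l \<in> {1..n}"
  then have "1 \<le> l" "l \<le> n" by auto
  from \<open>l \<le> n\<close> show "{disc d n l<..(int \<circ> d) l} \<subseteq> disc d n ` {1..n}"
  proof (induction rule: inc_induct)
    case base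
    then show ?case using disc_last[of d n] by simp
  next
    case (step k)
    show ?case
    proof
      fix x assume x: "x \<in> {disc d n k<..(int \<circ> d) k}"
      then have "disc d n (Suc k) = disc d n k + 1"
        using disc_step[of k n d] \<open>k < n\<close> by auto
      moreover have "d k \<le> d (Suc k)" using mono \<open>1 \<le> l\<close> step.hyps by simp
      moreover have "Suc k \<in> {1..n}" using step.hyps by simp
      ultimately show "x \<in> disc d n ` {1..n}"
        using x step.IH by (cases "x = disc d n (Suc k)") (force, auto)
    qed
  qed
qed

definition visit :: "(nat \<Rightarrow> nat) \<Rightarrow> (nat \<Rightarrow> nat) \<Rightarrow> bool \<times> nat \<Rightarrow> nat" where
  "visit t s = (\<lambda>(b, i). if b then t i else s i)"

lemma is_schedule_visit:
  "is_schedule n t s \<longleftrightarrow> bij_betw (visit t s) (UNIV \<times> {1..n}) {1..2*n}"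
  unfolding is_schedule_def visit_def ..

lemma visit_image: "visit t s ` (UNIV \<times> N) = t ` N \<union> s ` N"
  unfolding visit_def by force

lemma schedule_image:
  "is_schedule n t s \<Longrightarrow> t ` {1..n} \<union> s ` {1..n} = {1..2*n}"
  by (simp add: is_schedule_visit bij_betw_def visit_image)

lemma schedule_secondary_mem:
  "is_schedule n t s \<Longrightarrow> i \<in> {1..n} \<Longrightarrow> s i \<in> {1..2*n}"
  using schedule_image[of n t s] by (metis UnI2 imageI)

lemma schedule_inj_on_primary:
  assumes "is_schedule n t s"
  shows "inj_on t {1..n}"
proof (rule inj_onI)
  fix i j assume "i \<in> {1..n}" "j \<in> {1..n}" "t i = t j"
  then have "visit t s (True, i) = visit t s (True, j)" by (simp add: visit_def)
  then show "i = j"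
    using assms \<open>i \<in> {1..n}\<close> \<open>j \<in> {1..n}\<close>
    by (auto simp: is_schedule_visit bij_betw_def dest: inj_onD)
qed

lemma schedule_primary_ne_secondary:
  assumes "is_schedule n t s" "i \<in> {1..n}" "j \<in> {1..n}"
  shows "t i \<noteq> s j"
proof
  assume "t i = s j"
  then have "visit t s (True, i) = visit t s (False, j)" by (simp add: visit_def)
  then show False
    using assms by (auto simp: is_schedule_visit bij_betw_def dest: inj_onD)
qed

lemma is_schedule_transpose_visits:
  assumes "is_schedule n t s" "u \<in> UNIV \<times> {1..n}" "v \<in> UNIV \<times> {1..n}"
    and "visit t' s' = visit t s \<circ> transpose u v"
  shows "is_schedule n t' s'"
  using assms bij_betw_trans[OF bij_betw_transpose_iff, of u "UNIV \<times> {1..n}" v]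
  by (simp add: is_schedule_visit)

lemma is_schedule_exchange:
  assumes "is_schedule n t s" "l \<in> {1..n}" "m \<in> {1..n}"
  shows "is_schedule n (t(l := s m)) (s(m := t l))"
proof (rule is_schedule_transpose_visits)
  show "visit (t(l := s m)) (s(m := t l)) = visit t s \<circ> transpose (True, l) (False, m)"
    by (auto simp: visit_def transpose_def)
qed (use assms in auto)

lemma is_schedule_swap_secondaries:
  assumes "is_schedule n t s" "i \<in> {1..n}" "j \<in> {1..n}"
  shows "is_schedule n t (s \<circ> transpose i j)"
proof (rule is_schedule_transpose_visits)
  show "visit t (s \<circ> transpose i j) = visit t s \<circ> transpose (False, i) (False, j)"
    by (auto simp: visit_def transpose_def)
qed (use assms in auto)

lemma feasible_exchange_later:
  assumes feas: "feasible n d t s" and "l \<in> {1..n}" "m \<in> {1..n}"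
    and later: "t l < s m" "s m \<le> d l"
  shows "feasible n d (t(l := s m)) (s(m := t l))"
proof -
  have sched: "is_schedule n t s"
    and nodes: "\<forall>i\<in>{1..n}. t i \<le> d i \<and> (s i < t i \<or> s i \<le> t i + d i)"
    using feas by (auto simp: feasible_def)
  have "s l < t l \<or> s l \<le> t l + d l" "s m < t m \<or> s m \<le> t m + d m"
    using nodes \<open>l \<in> {1..n}\<close> \<open>m \<in> {1..n}\<close> by auto
  then have "\<forall>i\<in>{1..n}. (t(l := s m)) i \<le> d i
      \<and> ((s(m := t l)) i < (t(l := s m)) i \<or> (s(m := t l)) i \<le> (t(l := s m)) i + d i)"
    using nodes later by auto
  with is_schedule_exchange[OF sched \<open>l \<in> {1..n}\<close> \<open>m \<in> {1..n}\<close>] show ?thesis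
    by (simp add: feasible_def)
qed

lemma exists_feasible_deadline_closed:
  assumes bound: "\<forall>i\<in>{1..n}. d i \<le> 2 * n" and feas: "feasible n d t s"
  shows "\<exists>t s. feasible n d t s \<and> deadline_closed {1..n} d t"
proof -
  define P where "P k \<longleftrightarrow> (\<exists>t s. feasible n d t s \<and> sum t {1..n} = k)" for k
  have bounded: "k \<le> sum d {1..n}" if Pk: "P k" for k
  proof -
    from Pk obtain t1 s1 where "feasible n d t1 s1" "sum t1 {1..n} = k"
      unfolding P_def by blast
    then show ?thesis
      using sum_mono[of "{1..n}" t1 d] by (simp add: feasible_def)
  qed
  have "P (sum t {1..n})" using feas unfolding P_def by blast
  from Nat.ex_has_greatest_nat[of P, OF this] bounded
  obtain k where "P k" and greatest: "\<forall>k'. P k' \<longrightarrow> k' \<le> k" by blast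
  then obtain t' s' where feas': "feasible n d t' s'" and "sum t' {1..n} = k"
    unfolding P_def by blast
  have "{t' l<..d l} \<subseteq> t' ` {1..n}" if l: "l \<in> {1..n}" for l
  proof
    fix x assume x: "x \<in> {t' l<..d l}"
    show "x \<in> t' ` {1..n}"
    proof (rule ccontr)
      assume "x \<notin> t' ` {1..n}"
      moreover have "x \<in> t' ` {1..n} \<union> s' ` {1..n}"
      proof -
        have "x \<in> {1..2*n}" using x bound l by fastforce
        then show ?thesis using schedule_image[of n t' s'] feas' by (simp add: feasible_def)
      qed
      ultimately obtain m where m: "m \<in> {1..n}" "s' m = x" by auto
      then have "feasible n d (t'(l := s' m)) (s'(m := t' l))"
        using feasible_exchange_later[OF feas' l m(1)] x by simp
      then have "P (sum (t'(l := s' m)) {1..n})" unfolding P_def by blast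
      moreover have "sum t' {1..n} < sum (t'(l := s' m)) {1..n}"
        using l x m(2) by (simp add: sum.remove)
      ultimately show False
        using greatest \<open>sum t' {1..n} = k\<close> by (meson leD)
    qed
  qed
  then show ?thesis
    using feas' unfolding deadline_closed_def by blast
qed

lemma primaries_eq_disc:
  assumes mono: "\<forall>i j. 1 \<le> i \<and> i \<le> j \<and> j \<le> n \<longrightarrow> d i \<le> d j"
    and feas: "feasible n d t s" and closed: "deadline_closed {1..n} d t"
  shows "int ` t ` {1..n} = disc d n ` {1..n}"
proof -
  have "inj_on t {1..n}"
    using schedule_inj_on_primary[of n t s] feas by (simp add: feasible_def)
  then have inj_t: "inj_on (int \<circ> t) {1..n}"
    by (rule comp_inj_on[OF _ inj_on_subset[OF inj_of_nat subset_UNIV]])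
  have inj_disc: "inj_on (disc d n) {1..n}"
    by (rule inj_on_subset[OF strict_mono_on_imp_inj_on[OF strict_mono_on_disc]]) auto
  have below_t: "\<forall>l\<in>{1..n}. (int \<circ> t) l \<le> (int \<circ> d) l"
    using feas by (simp add: feasible_def)
  have below_disc: "\<forall>l\<in>{1..n}. disc d n l \<le> (int \<circ> d) l"
    by (simp add: disc_le_deadline)
  have "(int \<circ> t) ` {1..n} = disc d n ` {1..n}"
    using deadline_closed_image_eq[OF finite_atLeastAtMost inj_t inj_disc below_t below_disc
        deadline_closed_int[OF closed] deadline_closed_disc[OF mono]] .
  then show ?thesis by (simp add: image_comp)
qed

lemma secondaries_in_gaps:
  assumes mono: "\<forall>i j. 1 \<le> i \<and> i \<le> j \<and> j \<le> n \<longrightarrow> d i \<le> d j"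
    and feas: "feasible n d t s" and closed: "deadline_closed {1..n} d t"
    and i: "i \<in> {1..n}"
  shows "is_gap d n (s i)"
proof -
  have sched: "is_schedule n t s" using feas by (simp add: feasible_def)
  have "s i \<notin> t ` {1..n}"
    using schedule_primary_ne_secondary[OF sched _ i] by force
  then have "int (s i) \<notin> disc d n ` {1..n}"
    unfolding primaries_eq_disc[OF mono feas closed, symmetric] by auto
  then show ?thesis
    using schedule_secondary_mem[OF sched i] by (simp add: is_gap_def)
qed

lemma feasible_swap_secondaries:
  assumes feas: "feasible n d t s" and ij: "i \<in> {1..n}" "j \<in> {1..n}"
    and inversion: "s i < s j" "induced_deadline d t j < induced_deadline d t i"
  shows "feasible n d t (s \<circ> transpose i j)"
proof -
  have sched: "is_schedule n t s"
    and nodes: "\<forall>k\<in>{1..n}. t k \<le> d k \<and> (s k < t k \<or> s k \<le> t k + d k)"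
    using feas by (auto simp: feasible_def)
  have "s j \<le> t j + d j" using nodes \<open>j \<in> {1..n}\<close> by fastforce
  moreover from this have "s j < t i + d i" using inversion by (simp add: induced_deadline_def)
  ultimately have "\<forall>k\<in>{1..n}. t k \<le> d k
      \<and> ((s \<circ> transpose i j) k < t k \<or> (s \<circ> transpose i j) k \<le> t k + d k)"
    using nodes inversion ij by (auto simp: transpose_def)
  with is_schedule_swap_secondaries[OF sched ij] show ?thesis
    by (simp add: feasible_def)
qed

lemma sum_transpose_rearrangement:
  fixes s w :: "'a \<Rightarrow> nat"
  assumes "finite N" "i \<in> N" "j \<in> N" and "s i < s j" "w j < w i"
  shows "(\<Sum>l\<in>N. s l * w l) < (\<Sum>l\<in>N. s (transpose i j l) * w l)"
proof -
  have "i \<noteq> j" using \<open>s i < s j\<close> by auto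
  obtain a b where "s j = Suc (s i + a)" "w i = Suc (w j + b)"
    using \<open>s i < s j\<close> \<open>w j < w i\<close> by (blast dest: less_imp_Suc_add)
  then have "s i * w i + s j * w j < s j * w i + s i * w j"
    by (simp add: algebra_simps)
  moreover have "(\<Sum>l\<in>N - {i, j}. s (transpose i j l) * w l) = (\<Sum>l\<in>N - {i, j}. s l * w l)"
    by (rule sum.cong) auto
  moreover have split: "sum g N = sum g (N - {i, j}) + (g i + g j)" for g :: "'a \<Rightarrow> nat"
    using assms \<open>i \<noteq> j\<close> sum.subset_diff[of "{i, j}" N g] by simp
  ultimately show ?thesis
    unfolding split[of "\<lambda>l. s l * w l"] split[of "\<lambda>l. s (transpose i j l) * w l"]
    using \<open>i \<noteq> j\<close> by simp
qed

lemma exists_feasible_sorted_secondaries: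
  assumes feas: "feasible n d t s"
  shows "\<exists>s'. feasible n d t s' \<and> s' ` {1..n} = s ` {1..n} \<and>
           (\<forall>i\<in>{1..n}. \<forall>j\<in>{1..n}. s' i < s' j \<longrightarrow>
              induced_deadline d t i \<le> induced_deadline d t j)"
proof -
  let ?w = "induced_deadline d t"
  define P where "P k \<longleftrightarrow> (\<exists>s'. feasible n d t s' \<and> s' ` {1..n} = s ` {1..n}
    \<and> (\<Sum>l\<in>{1..n}. s' l * ?w l) = k)" for k
  have bounded: "k \<le> (\<Sum>l\<in>{1..n}. 2 * n * ?w l)" if Pk: "P k" for k
  proof -
    from Pk obtain s' where "feasible n d t s'" "(\<Sum>l\<in>{1..n}. s' l * ?w l) = k"
      unfolding P_def by blast
    moreover have "s' l \<le> 2 * n" if "l \<in> {1..n}" for l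
      using schedule_secondary_mem[OF _ that, of t s'] \<open>feasible n d t s'\<close>
      by (simp add: feasible_def)
    ultimately show ?thesis by (auto intro!: sum_mono)
  qed
  have "P (\<Sum>l\<in>{1..n}. s l * ?w l)" using feas unfolding P_def by blast
  from Nat.ex_has_greatest_nat[of P, OF this] bounded
  obtain k where "P k" and greatest: "\<forall>k'. P k' \<longrightarrow> k' \<le> k" by blast
  then obtain s' where feas': "feasible n d t s'" and img: "s' ` {1..n} = s ` {1..n}"
    and "(\<Sum>l\<in>{1..n}. s' l * ?w l) = k"
    unfolding P_def by blast
  have "?w i \<le> ?w j" if "i \<in> {1..n}" "j \<in> {1..n}" "s' i < s' j" for i j
  proof (rule ccontr)
    assume "\<not> ?w i \<le> ?w j"
    then have "feasible n d t (s' \<circ> transpose i j)"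
      using feasible_swap_secondaries[OF feas' that] by simp
    moreover have "(s' \<circ> transpose i j) ` {1..n} = s ` {1..n}"
      unfolding image_comp[symmetric] using img that by simp
    ultimately have "P (\<Sum>l\<in>{1..n}. (s' \<circ> transpose i j) l * ?w l)"
      unfolding P_def by blast
    moreover have "k < (\<Sum>l\<in>{1..n}. (s' \<circ> transpose i j) l * ?w l)"
      using sum_transpose_rearrangement[of "{1..n}" i j s' ?w] that \<open>\<not> ?w i \<le> ?w j\<close>
        \<open>(\<Sum>l\<in>{1..n}. s' l * ?w l) = k\<close> by simp
    ultimately show False using greatest by (meson leD)
  qed
  with feas' img show ?thesis by blast
qed

theorem theorem1:
  fixes n :: nat and d :: "nat \<Rightarrow> nat" and t s :: "nat \<Rightarrow> nat"
  assumes pos: "\<forall>i\<in>{1..n}. 0 < d i"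
    and mono: "\<forall>i j. 1 \<le> i \<and> i \<le> j \<and> j \<le> n \<longrightarrow> d i \<le> d j"
    and disc_pos: "\<forall>i\<in>{1..n}. 0 < disc d n i"
    and bound: "\<forall>i\<in>{1..n}. d i \<le> 2 * n"
    and feas: "feasible n d t s"
  shows "\<exists>t' s'. feasible n d t' s'
           \<and> (\<forall>i\<in>{1..n}. is_gap d n (s' i))
           \<and> (\<forall>i\<in>{1..n}. \<forall>j\<in>{1..n}. s' i < s' j \<longrightarrow>
                 induced_deadline d t' i \<le> induced_deadline d t' j)"
proof -
  obtain t' s1 where feas1: "feasible n d t' s1" and closed: "deadline_closed {1..n} d t'"
    using exists_feasible_deadline_closed[OF bound feas] by blast
  obtain s' where "feasible n d t' s'" and img: "s' ` {1..n} = s1 ` {1..n}"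
    and sorted: "\<forall>i\<in>{1..n}. \<forall>j\<in>{1..n}. s' i < s' j \<longrightarrow>
                   induced_deadline d t' i \<le> induced_deadline d t' j"
    using exists_feasible_sorted_secondaries[OF feas1] by blast
  moreover have "\<forall>i\<in>{1..n}. is_gap d n (s' i)"
    using secondaries_in_gaps[OF mono feas1 closed] img by (metis imageE imageI)
  ultimately show ?thesis by blast
qed

end
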